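(* Let $k\ge 2$ and let $a\in A_i$ be an additive agent. Suppose an allocation $(G_1,\dots,G_k)$ is PROP$(k-1)$ for $a$. Then: (a) the allocation is $1/k$-fraction-MMS-fair for $a$; moreover the factor $1/k$ is tight: there exist an additive agent and an allocation among $k$ groups that is EF1 (hence PROP$(k-1)$) for that agent such that the agent's utility is exactly $\frac1k$ of her maximin share $\mathrm{MMS}^k$; (b) the allocation is 1-out-of-$(2k-1)$ MMS-fair for $a$; moreover $2k-1$ is tight: there exist an additive agent and an allocation among $k$ groups that is EF1 (hence PROP$(k-1)$) for that agent but not 1-out-of-$(2k-2)$ MMS-fair for her; (c) if $a$ is binary, the allocation is MMS-fair for $a$; moreover, for a binary agent, MMS-fairness implies PROP$(k-1)$.
   Context: There is a finite set $G$ of goods and $k\ge 2$ groups $A_1,\dots,A_k$ of agents. Each agent $a$ has a utility function $u_a:2^G\to\mathbb{R}_{\ge 0}$; it is additive if $u_a(X)=\sum_{g\in X}u_a(\{g\})$, and binary if additive with $u_a(\{g\})\in\{0,1\}$ for every good $g$. An allocation is a partition $(G_1,\dots,G_k)$ of $G$; group $A_i$ receives $G_i$ and each agent $a\in A_i$ gets $u_a(G_i)$. For an agent $a\in A_i$ and integer $c\ge 0$: the allocation is EF$c$ for $a$ if for every $i'$ there is $C\subseteq G_{i'}$, $|C|\le c$, with $u_a(G_i)\ge u_a(G_{i'}\setminus C)$; it is PROP$c$ for $a$ if there is $C\subseteq G\setminus G_i$, $|C|\le c$, with $u_a(G_i)\ge\frac1k u_a(G\setminus C)$. For an integer $c\ge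 1$, $\mathrm{MMS}^c_a(G)=\max\min(u_a(P_1),\dots,u_a(P_c))$, the maximum over all partitions $(P_1,\dots,P_c)$ of $G$ into $c$ sets. The allocation is MMS-fair for $a$ if $u_a(G_i)\ge \mathrm{MMS}^k_a(G)$; 1-out-of-$c$ MMS-fair for $a$ (for $c\ge k$) if $u_a(G_i)\ge\mathrm{MMS}^c_a(G)$; $q$-fraction-MMS-fair for $a$ if $u_a(G_i)\ge q\,\mathrm{MMS}^k_a(G)$. *)

theory Defs
  imports Complex_Main
begin

text \<open>Partition of the good set G into c (possibly empty) bundles indexed by 0..c-1.
  An allocation among k groups is such a partition with c = k; group i receives P i.\<close>
definition is_partition :: "'g set \<Rightarrow> nat \<Rightarrow> (nat \<Rightarrow> 'g set) \<Rightarrow> bool" where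
  "is_partition G c P \<longleftrightarrow>
     (\<forall>j<c. P j \<subseteq> G) \<and>
     (\<forall>j<c. \<forall>j'<c. j \<noteq> j' \<longrightarrow> P j \<inter> P j' = {}) \<and>
     (\<Union>j<c. P j) = G"

definition additive :: "'g set \<Rightarrow> ('g set \<Rightarrow> real) \<Rightarrow> bool" where
  "additive G u \<longleftrightarrow> (\<forall>X\<subseteq>G. u X \<ge> 0) \<and> (\<forall>X\<subseteq>G. u X = (\<Sum>g\<in>X. u {g}))"

definition binary :: "'g set \<Rightarrow> ('g set \<Rightarrow> real) \<Rightarrow> bool" where
  "binary G u \<longleftrightarrow> additive G u \<and> (\<forall>g\<in>G. u {g} = 0 \<or> u {g} = 1)"

definition MMS :: "('g set \<Rightarrow> real) \<Rightarrow> 'g set \<Rightarrow> nat \<Rightarrow> real" where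
  "MMS u G c = Max {(MIN j\<in>{..<c}. u (P j)) | P. is_partition G c P}"

text \<open>EFc for the agent with utility u, who belongs to group i, under allocation P among k groups.\<close>
definition EFc :: "nat \<Rightarrow> ('g set \<Rightarrow> real) \<Rightarrow> (nat \<Rightarrow> 'g set) \<Rightarrow> nat \<Rightarrow> nat \<Rightarrow> bool" where
  "EFc k u P i c \<longleftrightarrow> (\<forall>i'<k. \<exists>C\<subseteq>P i'. card C \<le> c \<and> u (P i) \<ge> u (P i' - C))"

definition PROPc :: "'g set \<Rightarrow> nat \<Rightarrow> ('g set \<Rightarrow> real) \<Rightarrow> (nat \<Rightarrow> 'g set) \<Rightarrow> nat \<Rightarrow> nat \<Rightarrow> bool" where
  "PROPc G k u P i c \<longleftrightarrow> (\<exists>C\<subseteq>G - P i. card C \<le> c \<and> u (P i) \<ge> u (G - C) / real k)"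

definition MMS_fair :: "'g set \<Rightarrow> nat \<Rightarrow> ('g set \<Rightarrow> real) \<Rightarrow> (nat \<Rightarrow> 'g set) \<Rightarrow> nat \<Rightarrow> bool" where
  "MMS_fair G k u P i \<longleftrightarrow> u (P i) \<ge> MMS u G k"

definition one_of_c_MMS_fair :: "'g set \<Rightarrow> nat \<Rightarrow> ('g set \<Rightarrow> real) \<Rightarrow> (nat \<Rightarrow> 'g set) \<Rightarrow> nat \<Rightarrow> bool" where
  "one_of_c_MMS_fair G c u P i \<longleftrightarrow> u (P i) \<ge> MMS u G c"

definition frac_MMS_fair :: "'g set \<Rightarrow> nat \<Rightarrow> ('g set \<Rightarrow> real) \<Rightarrow> (nat \<Rightarrow> 'g set) \<Rightarrow> nat \<Rightarrow> real \<Rightarrow> bool" where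
  "frac_MMS_fair G k u P i q \<longleftrightarrow> u (P i) \<ge> q * MMS u G k"

end

theory Submission
  imports Defs "HOL-Library.FuncSet"
begin

text \<open>Fix a partition of G into c bundles that witnesses the maximin share MMS^c.  A set C of
  goods meets at most |C| of these bundles, so u(G - C) >= (c - |C|) MMS^c.  PROP(k-1) provides
  such a C with |C| <= k - 1 and k u(G_i) >= u(G - C); taking c = k gives u(G_i) >= MMS^k / k,
  and taking c = 2k - 1 gives u(G_i) >= MMS^(2k-1).  For a binary agent approving n goods,
  MMS^k = n div k, and both directions of the binary statement reduce to the arithmetic fact
  that k v + (k - 1) >= n iff v >= n div k.\<close>

section \<open>Additive utilities\<close>

lemma additive_eq_sum: "additive G u \<Longrightarrow> X \<subseteq> G \<Longrightarrow> u X = (\<Sum>g\<in>X. u {g})"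
  unfolding additive_def by blast

lemma additive_nonneg: "additive G u \<Longrightarrow> X \<subseteq> G \<Longrightarrow> 0 \<le> u X"
  unfolding additive_def by blast

lemma additive_mono:
  assumes "additive G u" "finite G" "X \<subseteq> Y" "Y \<subseteq> G"
  shows "u X \<le> u Y"
proof -
  have "(\<Sum>g\<in>X. u {g}) \<le> (\<Sum>g\<in>Y. u {g})"
    using assms additive_nonneg[OF assms(1)] by (intro sum_mono2) (auto intro: finite_subset)
  then show ?thesis
    using assms additive_eq_sum[OF assms(1)] by (metis order_trans)
qed

lemma is_partition_subset: "is_partition G c Q \<Longrightarrow> j < c \<Longrightarrow> Q j \<subseteq> G"
  unfolding is_partition_def by blast

lemma is_partition_disjoint:
  "is_partition G c Q \<Longrightarrow> j < c \<Longrightarrow> j' < c \<Longrightarrow> j \<noteq> j' \<Longrightarrow> Q j \<inter> Q j' = {}"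
  unfolding is_partition_def by blast

lemma is_partition_fibres:
  "(\<And>g. g \<in> G \<Longrightarrow> f g < c) \<Longrightarrow> is_partition G c (\<lambda>j. {g\<in>G. f g = j})"
  unfolding is_partition_def by auto

lemma additive_UN_bundles:
  assumes "additive G u" "finite G" "is_partition G c Q" "J \<subseteq> {..<c}"
  shows "u (\<Union>j\<in>J. Q j) = (\<Sum>j\<in>J. u (Q j))"
proof -
  have sub: "\<And>j. j \<in> J \<Longrightarrow> Q j \<subseteq> G"
    using assms(3,4) is_partition_subset by blast
  have "u (\<Union>j\<in>J. Q j) = (\<Sum>g\<in>(\<Union>j\<in>J. Q j). u {g})"
    using sub by (intro additive_eq_sum[OF assms(1)]) blast
  also have "\<dots> = (\<Sum>j\<in>J. \<Sum>g\<in>Q j. u {g})"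
  proof (rule sum.UNION_disjoint)
    show "finite J" using assms(4) finite_subset by blast
    show "\<forall>j\<in>J. finite (Q j)" using sub assms(2) finite_subset by blast
    show "\<forall>i\<in>J. \<forall>j\<in>J. i \<noteq> j \<longrightarrow> Q i \<inter> Q j = {}"
      using assms(4) is_partition_disjoint[OF assms(3)] by blast
  qed
  also have "\<dots> = (\<Sum>j\<in>J. u (Q j))"
    using sub additive_eq_sum[OF assms(1)] by (intro sum.cong) auto
  finally show ?thesis .
qed

lemma card_bundles_meeting_le:
  assumes "is_partition G c Q" "finite C"
  shows "card {j. j < c \<and> Q j \<inter> C \<noteq> {}} \<le> card C"
proof -
  define bundle_of where "bundle_of x = (SOME j. j < c \<and> x \<in> Q j)" for x
  have "{j. j < c \<and> Q j \<inter> C \<noteq> {}} \<subseteq> bundle_of ` C"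
  proof
    fix j assume "j \<in> {j. j < c \<and> Q j \<inter> C \<noteq> {}}"
    then obtain x where j: "j < c" "x \<in> Q j" "x \<in> C" by blast
    have "bundle_of x < c \<and> x \<in> Q (bundle_of x)"
      unfolding bundle_of_def using j(1,2) by (rule someI[of _ j, OF conjI])
    then have "bundle_of x = j"
      using j is_partition_disjoint[OF assms(1)] by blast
    then show "j \<in> bundle_of ` C" using j(3) by blast
  qed
  then show ?thesis
    using assms(2) by (meson card_image_le card_mono finite_imageI le_trans)
qed

text \<open>C meets at most |C| bundles; the other bundles lie inside G - C.\<close>
lemma additive_Diff_ge_bundles:
  assumes "additive G u" "finite G" "is_partition G c Q" "\<And>j. j < c \<Longrightarrow> M \<le> u (Q j)"
    "0 \<le> M" "C \<subseteq> G"
  shows "real (c - card C) * M \<le> u (G - C)"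
proof -
  define intact where "intact = {j. j < c \<and> Q j \<inter> C = {}}"
  have "intact = {..<c} - {j. j < c \<and> Q j \<inter> C \<noteq> {}}"
    unfolding intact_def by auto
  then have "card intact = c - card {j. j < c \<and> Q j \<inter> C \<noteq> {}}"
    by (simp add: card_Diff_subset subset_eq)
  then have "c - card C \<le> card intact"
    using card_bundles_meeting_le[OF assms(3) finite_subset[OF assms(6,2)]] by linarith
  then have "real (c - card C) * M \<le> real (card intact) * M"
    using assms(5) by (intro mult_right_mono) auto
  also have "\<dots> \<le> (\<Sum>j\<in>intact. u (Q j))"
    using assms(4) by (intro sum_bounded_below) (auto simp: intact_def)
  also have "\<dots> = u (\<Union>j\<in>intact. Q j)"
    using assms(1-3) by (intro additive_UN_bundles[symmetric]) (auto simp: intact_def)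
  also have "\<dots> \<le> u (G - C)"
    using assms(1,2) is_partition_subset[OF assms(3)]
    by (intro additive_mono) (auto simp: intact_def)
  finally show ?thesis .
qed

section \<open>Maximin shares\<close>

lemma finite_MMS_values:
  assumes "finite G"
  shows "finite {(MIN j\<in>{..<c}. u (P j)) | P. is_partition G c P}"
proof -
  have "{(MIN j\<in>{..<c}. u (P j)) | P. is_partition G c P}
     \<subseteq> (\<lambda>f. MIN j\<in>{..<c}. u (f j)) ` ({..<c} \<rightarrow>\<^sub>E Pow G)"
  proof
    fix x assume "x \<in> {(MIN j\<in>{..<c}. u (P j)) | P. is_partition G c P}"
    then obtain P where P: "is_partition G c P" "x = (MIN j\<in>{..<c}. u (P j))" by blast
    have "restrict P {..<c} \<in> {..<c} \<rightarrow>\<^sub>E Pow G"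
      using is_partition_subset[OF P(1)] by (simp add: PiE_iff)
    moreover have "x = (MIN j\<in>{..<c}. u (restrict P {..<c} j))"
      using P(2) by simp
    ultimately show "x \<in> (\<lambda>f. MIN j\<in>{..<c}. u (f j)) ` ({..<c} \<rightarrow>\<^sub>E Pow G)" by blast
  qed
  moreover have "finite ({..<c} \<rightarrow>\<^sub>E Pow G)" using assms by (simp add: finite_PiE)
  ultimately show ?thesis using finite_subset by blast
qed

lemma MMS_ge_partition:
  assumes "finite G" "is_partition G c Q" "0 < c" "\<And>j. j < c \<Longrightarrow> M \<le> u (Q j)"
  shows "M \<le> MMS u G c"
proof -
  have "M \<le> (MIN j\<in>{..<c}. u (Q j))"
    using assms(3,4) by (subst Min_ge_iff) auto
  also have "\<dots> \<le> MMS u G c"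
    unfolding MMS_def using finite_MMS_values[OF assms(1)] assms(2) by (intro Max_ge) blast+
  finally show ?thesis .
qed

lemma obtain_MMS_partition:
  assumes "finite G" "0 < c"
  obtains Q j0 where "is_partition G c Q" "\<And>j. j < c \<Longrightarrow> MMS u G c \<le> u (Q j)"
    "j0 < c" "MMS u G c = u (Q j0)"
proof -
  have "is_partition G c (\<lambda>j. if j = 0 then G else {})"
    using assms(2) unfolding is_partition_def by auto
  then have "{(MIN j\<in>{..<c}. u (P j)) | P. is_partition G c P} \<noteq> {}" by blast
  from Max_in[OF finite_MMS_values[OF assms(1)] this] obtain Q
    where Q: "is_partition G c Q" "MMS u G c = (MIN j\<in>{..<c}. u (Q j))"
    unfolding MMS_def by auto
  moreover have "(MIN j\<in>{..<c}. u (Q j)) \<in> (\<lambda>j. u (Q j)) ` {..<c}"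
    using assms(2) by (intro Min_in) auto
  then obtain j0 where "j0 < c" "(MIN j\<in>{..<c}. u (Q j)) = u (Q j0)" by auto
  moreover have "\<And>j. j < c \<Longrightarrow> MMS u G c \<le> u (Q j)"
    using Q(2) by simp
  ultimately show ?thesis
    using that[of Q j0] by simp
qed

lemma MMS_nonneg:
  assumes "additive G u" "finite G" "0 < c"
  shows "0 \<le> MMS u G c"
proof -
  obtain Q j0 where "is_partition G c Q" "j0 < c" "MMS u G c = u (Q j0)"
    using obtain_MMS_partition[OF assms(2,3)] by metis
  then show ?thesis
    using additive_nonneg[OF assms(1)] is_partition_subset by metis
qed

lemma MMS_le_Diff:
  assumes "additive G u" "finite G" "0 < c" "C \<subseteq> G"
  shows "real (c - card C) * MMS u G c \<le> u (G - C)"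
proof -
  obtain Q where "is_partition G c Q" "\<And>j. j < c \<Longrightarrow> MMS u G c \<le> u (Q j)"
    using obtain_MMS_partition[OF assms(2,3)] by metis
  then show ?thesis
    using additive_Diff_ge_bundles assms MMS_nonneg by blast
qed

lemma MMS_le_average:
  assumes "additive G u" "finite G" "0 < c"
  shows "real c * MMS u G c \<le> u G"
  using MMS_le_Diff[OF assms, of "{}"] by simp

lemma PROPc_imp_MMS_bound:
  assumes "additive G u" "finite G" "0 < c" "0 < k" "PROPc G k u P i t"
  shows "real (c - t) * MMS u G c \<le> real k * u (P i)"
proof -
  obtain C where C: "C \<subseteq> G - P i" "card C \<le> t" "u (G - C) / real k \<le> u (P i)"
    using assms(5) unfolding PROPc_def by blast
  have "real (c - t) * MMS u G c \<le> real (c - card C) * MMS u G c"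
    using C(2) MMS_nonneg[OF assms(1-3)] by (intro mult_right_mono) auto
  also have "\<dots> \<le> u (G - C)"
    using C(1) by (intro MMS_le_Diff[OF assms(1-3)]) blast
  also have "\<dots> \<le> real k * u (P i)"
    using C(3) assms(4) by (simp add: divide_le_eq mult.commute)
  finally show ?thesis .
qed

lemma PROPc_imp_frac_MMS_fair:
  assumes "0 < k" "finite G" "additive G u" "PROPc G k u P i (k - 1)"
  shows "frac_MMS_fair G k u P i (1 / real k)"
  using PROPc_imp_MMS_bound[OF assms(3,2) _ _ assms(4), of k] assms(1)
  unfolding frac_MMS_fair_def by (simp add: field_simps)

lemma PROPc_imp_one_of_2k_minus_1_MMS_fair:
  assumes "0 < k" "finite G" "additive G u" "PROPc G k u P i (k - 1)"
  shows "one_of_c_MMS_fair G (2 * k - 1) u P i"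
proof -
  have "real k * MMS u G (2 * k - 1) \<le> real k * u (P i)"
    using PROPc_imp_MMS_bound[OF assms(3,2) _ _ assms(4), of "2 * k - 1"] assms(1)
    by (simp add: of_nat_diff)
  then show ?thesis
    using assms(1) unfolding one_of_c_MMS_fair_def by simp
qed

section \<open>Binary utilities\<close>

definition approved :: "'g set \<Rightarrow> ('g set \<Rightarrow> real) \<Rightarrow> 'g set" where
  "approved G u = {g\<in>G. u {g} = 1}"

lemma binary_eq_card_approved:
  assumes "binary G u" "finite G" "X \<subseteq> G"
  shows "u X = real (card (X \<inter> approved G u))"
proof -
  have "u X = (\<Sum>g\<in>X. u {g})"
    using assms additive_eq_sum unfolding binary_def by blast
  also have "\<dots> = (\<Sum>g\<in>X. if g \<in> approved G u then 1 else 0)"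
    using assms unfolding binary_def approved_def by (intro sum.cong) auto
  also have "\<dots> = real (card (X \<inter> approved G u))"
    using finite_subset[OF assms(3,2)] by (simp add: sum.inter_restrict[symmetric])
  finally show ?thesis .
qed

lemma card_mod_fibre_ge:
  assumes "j < k"
  shows "n div k \<le> card {t. t < n \<and> t mod k = j}"
proof -
  have "(\<lambda>s. j + k * s) ` {..<n div k} \<subseteq> {t. t < n \<and> t mod k = j}"
  proof
    fix t assume "t \<in> (\<lambda>s. j + k * s) ` {..<n div k}"
    then obtain s where s: "s < n div k" "t = j + k * s" by blast
    have "k * (s + 1) \<le> k * (n div k)" using s(1) by (intro mult_le_mono2) simp
    also have "\<dots> \<le> n" by simp
    finally show "t \<in> {t. t < n \<and> t mod k = j}" using s(2) assms by simp
  qed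
  moreover have "inj_on (\<lambda>s. j + k * s) {..<n div k}"
    using assms by (auto simp: inj_on_def)
  ultimately show ?thesis
    by (metis card_image card_lessThan card_mono finite_Collect_conjI finite_Collect_less_nat)
qed

text \<open>Deal the approved goods round-robin to the k bundles.\<close>
lemma binary_MMS_ge:
  assumes "binary G u" "finite G" "0 < k"
  shows "real (card (approved G u) div k) \<le> MMS u G k"
proof -
  define V where "V = approved G u"
  define n where "n = card V"
  have VG: "V \<subseteq> G" unfolding V_def approved_def by blast
  obtain e where e: "bij_betw e {..<n} V"
    using ex_bij_betw_nat_finite[OF finite_subset[OF VG assms(2)]] unfolding n_def
    by (metis atLeast0LessThan)
  define q where "q g = (if g \<in> V then inv_into {..<n} e g mod k else 0)" for g
  have Q: "is_partition G k (\<lambda>j. {g\<in>G. q g = j})"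
    using assms(3) by (intro is_partition_fibres) (simp add: q_def)
  have "real (n div k) \<le> u {g\<in>G. q g = j}" if "j < k" for j
  proof -
    have "q (e t) = t mod k" if "t < n" for t
      using e that bij_betw_inv_into_left[OF e] bij_betwE[OF e] unfolding q_def by auto
    then have "e ` {t. t < n \<and> t mod k = j} \<subseteq> {g\<in>G. q g = j} \<inter> V"
      using VG bij_betwE[OF e] by auto
    then have "card (e ` {t. t < n \<and> t mod k = j}) \<le> card ({g\<in>G. q g = j} \<inter> V)"
      using finite_subset[OF VG assms(2)] by (intro card_mono) auto
    moreover have "card (e ` {t. t < n \<and> t mod k = j}) = card {t. t < n \<and> t mod k = j}"
      using e unfolding bij_betw_def by (intro card_image) (auto intro: inj_on_subset)
    ultimately show ?thesis
      using card_mod_fibre_ge[OF that, of n] binary_eq_card_approved[OF assms(1,2)]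
      unfolding V_def by simp
  qed
  then show ?thesis
    using MMS_ge_partition[OF assms(2) Q assms(3)] unfolding n_def V_def by blast
qed

lemma binary_MMS_le:
  assumes "binary G u" "finite G" "0 < k"
  shows "MMS u G k \<le> real (card (approved G u) div k)"
proof -
  have add: "additive G u" using assms(1) unfolding binary_def by blast
  obtain Q j0 where "is_partition G k Q" "j0 < k" "MMS u G k = u (Q j0)"
    using obtain_MMS_partition[OF assms(2,3)] by metis
  then obtain m where m: "MMS u G k = real m"
    using binary_eq_card_approved[OF assms(1,2)] is_partition_subset by metis
  have "real k * real m \<le> real (card (approved G u))"
    using MMS_le_average[OF add assms(2,3)] binary_eq_card_approved[OF assms(1,2), of G] m
    by (simp add: Int_absorb1 approved_def)
  then have "m \<le> card (approved G u) div k"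
    using assms(3) by (simp add: less_eq_div_iff_mult_less_eq mult.commute
        del: of_nat_mult add: of_nat_mult[symmetric])
  then show ?thesis using m by simp
qed

lemma binary_MMS_eq:
  "binary G u \<Longrightarrow> finite G \<Longrightarrow> 0 < k \<Longrightarrow> MMS u G k = real (card (approved G u) div k)"
  using binary_MMS_ge binary_MMS_le by (metis order_antisym)

lemma binary_Diff_eq_card:
  assumes "binary G u" "finite G" "C \<subseteq> G"
  shows "u (G - C) = real (card (approved G u - C))"
proof -
  have "(G - C) \<inter> approved G u = approved G u - C"
    unfolding approved_def by blast
  then show ?thesis
    using binary_eq_card_approved[OF assms(1,2), of "G - C"] by simp
qed

lemma binary_PROPc_imp_MMS_fair:
  assumes "binary G u" "finite G" "0 < k" "P i \<subseteq> G" "PROPc G k u P i (k - 1)"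
  shows "MMS_fair G k u P i"
proof -
  define n where "n = card (approved G u)"
  define v where "v = card (P i \<inter> approved G u)"
  obtain C where C: "C \<subseteq> G - P i" "card C \<le> k - 1" "u (G - C) / real k \<le> u (P i)"
    using assms(5) unfolding PROPc_def by blast
  have CG: "C \<subseteq> G" using C(1) by blast
  have "n - card C \<le> card (approved G u - C)"
    using finite_subset[OF CG assms(2)] unfolding n_def by (rule diff_card_le_card_Diff)
  also have "real \<dots> \<le> real k * real v"
    using C(3) assms(3) binary_Diff_eq_card[OF assms(1,2) CG]
      binary_eq_card_approved[OF assms(1,2,4)]
    unfolding v_def by (simp add: divide_le_eq mult.commute)
  finally have "n < k * (v + 1)"
    using C(2) assms(3) by (simp add: algebra_simps del: of_nat_mult add: of_nat_mult[symmetric])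
  then have "n div k < Suc v"
    using less_mult_imp_div_less[of n "Suc v" k] by (simp add: algebra_simps)
  then show ?thesis
    unfolding MMS_fair_def
    using binary_MMS_eq[OF assms(1-3)] binary_eq_card_approved[OF assms(1,2,4)] n_def v_def
    by simp
qed

text \<open>Drop from the other bundles up to k - 1 approved goods.\<close>
lemma binary_MMS_fair_imp_PROPc:
  assumes "binary G u" "finite G" "0 < k" "P i \<subseteq> G" "MMS_fair G k u P i"
  shows "PROPc G k u P i (k - 1)"
proof -
  define V where "V = approved G u"
  define n where "n = card V"
  define v where "v = card (P i \<inter> V)"
  define W where "W = V - P i"
  have fV: "finite V" using assms(2) unfolding V_def approved_def by simp
  have uP: "u (P i) = real v"
    using binary_eq_card_approved[OF assms(1,2,4)] unfolding v_def V_def .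
  have "n div k \<le> v"
    using assms(5) binary_MMS_eq[OF assms(1-3)] uP unfolding MMS_fair_def n_def V_def by simp
  have cW: "card W = n - v"
    unfolding W_def n_def v_def using fV by (simp add: card_Diff_subset_Int Int_commute)
  obtain C where C: "C \<subseteq> W" "card C = min (k - 1) (card W)"
    using obtain_subset_with_card_n[of "min (k - 1) (card W)" W] by auto
  have CV: "C \<subseteq> V" using C(1) unfolding W_def by blast
  have "u (G - C) = real (card (V - C))"
    using binary_Diff_eq_card[OF assms(1,2)] CV unfolding V_def approved_def by blast
  also have "card (V - C) = n - card C"
    unfolding n_def using card_Diff_subset[OF finite_subset[OF CV fV] CV] .
  also have "n - card C \<le> k * v"
  proof (cases "card W \<le> k - 1")
    case True
    have "v \<le> k * v" using assms(3) by simp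
    then show ?thesis using True C(2) cW by linarith
  next
    case False
    have "n - (k - 1) \<le> k * (n div k)"
      using mod_less_divisor[OF assms(3), of n] mult_div_mod_eq[of k n] by linarith
    also have "\<dots> \<le> k * v" using \<open>n div k \<le> v\<close> by simp
    finally show ?thesis using C(2) False by simp
  qed
  finally have "u (G - C) / real k \<le> u (P i)"
    using uP assms(3) by (simp add: divide_le_eq mult.commute)
  moreover have "C \<subseteq> G - P i" using C(1) unfolding W_def V_def approved_def by blast
  ultimately show ?thesis
    unfolding PROPc_def using C(2) by (metis min.cobounded1)
qed

section \<open>The tightness examples\<close>

text \<open>k * m goods 0, ..., k * m - 1 of value 1 followed by k - 1 goods of value k.  Group 0
  receives m unit goods; group j > 0 receives m unit goods and the valuable good k * m + j - 1.\<close>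
definition tight_goods :: "nat \<Rightarrow> nat \<Rightarrow> nat set" where
  "tight_goods k m = {..<k * m + (k - 1)}"

definition tight_utility :: "nat \<Rightarrow> nat \<Rightarrow> nat set \<Rightarrow> real" where
  "tight_utility k m X = (\<Sum>g\<in>X. if g < k * m then 1 else real k)"

definition tight_owner :: "nat \<Rightarrow> nat \<Rightarrow> nat \<Rightarrow> nat" where
  "tight_owner k m g = (if g < k * m then g div m else g - k * m + 1)"

definition tight_allocation :: "nat \<Rightarrow> nat \<Rightarrow> nat \<Rightarrow> nat set" where
  "tight_allocation k m j = {g\<in>tight_goods k m. tight_owner k m g = j}"

lemma finite_tight_goods: "finite (tight_goods k m)"
  unfolding tight_goods_def by simp

lemma additive_tight_utility: "additive (tight_goods k m) (tight_utility k m)"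
  unfolding additive_def tight_utility_def by (auto intro: sum_nonneg)

lemma tight_utility_units: "S \<subseteq> {..<k * m} \<Longrightarrow> tight_utility k m S = real (card S)"
  unfolding tight_utility_def by (subst sum.cong[OF refl, of _ _ "\<lambda>_. 1"]) auto

lemma tight_utility_total:
  "tight_utility k m (tight_goods k m) = real (k * m) + real (k - 1) * real k"
proof -
  have "tight_utility k m (tight_goods k m)
      = tight_utility k m {..<k * m} + tight_utility k m {k * m..<k * m + (k - 1)}"
    unfolding tight_utility_def tight_goods_def lessThan_atLeast0
    by (rule sum.atLeastLessThan_concat[symmetric]) auto
  moreover have "tight_utility k m {k * m..<k * m + (k - 1)} = real (k - 1) * real k"
    unfolding tight_utility_def by simp
  ultimately show ?thesis
    using tight_utility_units[of "{..<k * m}" k m] by simp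
qed

lemma is_partition_tight_allocation:
  "0 < k \<Longrightarrow> is_partition (tight_goods k m) k (tight_allocation k m)"
  unfolding tight_allocation_def tight_owner_def tight_goods_def
  by (intro is_partition_fibres) (auto simp: less_mult_imp_div_less mult.commute)

lemma tight_allocation_zero:
  "0 < k \<Longrightarrow> 0 < m \<Longrightarrow> tight_allocation k m 0 = {..<m}"
  unfolding tight_allocation_def tight_owner_def tight_goods_def
  by (auto simp: div_eq_0_iff intro: order.strict_trans2[of _ m "k * m"])

lemma tight_utility_allocation_zero:
  assumes "0 < k" "0 < m"
  shows "tight_utility k m (tight_allocation k m 0) = real m"
  using tight_allocation_zero[OF assms] tight_utility_units[of "{..<m}" k m] assms(1)
  by (simp add: subset_eq order.strict_trans2[of _ m "k * m"])

lemma tight_allocation_EF1: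
  assumes "0 < k" "0 < m"
  shows "EFc k (tight_utility k m) (tight_allocation k m) 0 1"
  unfolding EFc_def
proof (intro allI impI)
  fix j assume "j < k"
  show "\<exists>C\<subseteq>tight_allocation k m j. card C \<le> 1 \<and>
      tight_utility k m (tight_allocation k m j - C) \<le> tight_utility k m (tight_allocation k m 0)"
  proof (cases "j = 0")
    case False
    define R where "R = tight_allocation k m j - {k * m + j - 1}"
    have "k * m + j - 1 \<in> tight_allocation k m j"
      using False \<open>j < k\<close>
      unfolding tight_allocation_def tight_owner_def tight_goods_def by auto
    have R: "R \<subseteq> {g. g < k * m \<and> g div m = j}"
      using False unfolding R_def tight_allocation_def tight_owner_def by auto
    also have "\<dots> \<subseteq> {j * m..<j * m + m}"
      using div_times_less_eq_dividend dividend_less_div_times[OF assms(2)]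
      by (auto simp: add.commute)
    finally have "card R \<le> m"
      using card_mono[of "{j * m..<j * m + m}" R] by simp
    moreover have "tight_utility k m R = real (card R)"
      using R by (intro tight_utility_units) auto
    ultimately show ?thesis
      using tight_utility_allocation_zero[OF assms] \<open>k * m + j - 1 \<in> tight_allocation k m j\<close> unfolding R_def
      by (intro exI[of _ "{k * m + j - 1}"]) auto
  next
    case True
    then show ?thesis by (intro exI[of _ "{}"]) simp
  qed
qed

text \<open>Put each valuable good alone in a bundle, and cut the unit goods into m blocks of k.\<close>
lemma tight_MMS_ge:
  assumes "0 < k" "0 < m"
  shows "real k \<le> MMS (tight_utility k m) (tight_goods k m) (k - 1 + m)"
proof -
  define q where "q g = (if g < k * m then k - 1 + g div k else g - k * m)" for g
  define Q where "Q j = {g\<in>tight_goods k m. q g = j}" for j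
  have "g div k < m" if "g < k * m" for g
    using that assms(1) by (simp add: div_less_iff_less_mult mult.commute)
  then have Q: "is_partition (tight_goods k m) (k - 1 + m) Q"
    unfolding Q_def q_def tight_goods_def by (intro is_partition_fibres) auto
  have "real k \<le> tight_utility k m (Q j)" if j: "j < k - 1 + m" for j
  proof -
    obtain S where S: "S \<subseteq> Q j" "tight_utility k m S = real k"
    proof (cases "j < k - 1")
      case True
      then have "{k * m + j} \<subseteq> Q j" unfolding Q_def q_def tight_goods_def by auto
      moreover have "tight_utility k m {k * m + j} = real k" by (simp add: tight_utility_def)
      ultimately show ?thesis using that by blast
    next
      case False
      define s where "s = j - (k - 1)"
      have "s < m" "j = k - 1 + s" using False j unfolding s_def by auto
      then have "s * k + k \<le> k * m"
        by (metis add.commute mult.commute mult_Suc_right mult_le_mono2 Suc_leI)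
      moreover have "g div k = s" if "g \<in> {s * k..<s * k + k}" for g
        using that by (intro div_nat_eqI) (auto simp: mult.commute)
      ultimately have "{s * k..<s * k + k} \<subseteq> Q j"
        using \<open>j = k - 1 + s\<close> unfolding Q_def q_def tight_goods_def by auto
      moreover have "tight_utility k m {s * k..<s * k + k} = real k"
        using \<open>s * k + k \<le> k * m\<close> by (subst tight_utility_units) auto
      ultimately show ?thesis using that by blast
    qed
    then show ?thesis
      using additive_mono[OF additive_tight_utility _ S(1) is_partition_subset[OF Q j]]
      unfolding tight_goods_def by simp
  qed
  then show ?thesis
    using MMS_ge_partition[OF _ Q] assms(2) unfolding tight_goods_def by simp
qed

lemma tight_MMS_eq:
  assumes "0 < k"
  shows "MMS (tight_utility k 1) (tight_goods k 1) k = real k"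
proof (rule order_antisym)
  have "real k * MMS (tight_utility k 1) (tight_goods k 1) k \<le> real k * real k"
    using MMS_le_average[OF additive_tight_utility finite_tight_goods assms, of k 1]
      tight_utility_total[of k 1] assms
    by (simp add: of_nat_diff algebra_simps)
  then show "MMS (tight_utility k 1) (tight_goods k 1) k \<le> real k"
    using assms by simp
  show "real k \<le> MMS (tight_utility k 1) (tight_goods k 1) k"
    using tight_MMS_ge[OF assms, of 1] assms by simp
qed

lemma EF1_frac_MMS_bound_attained:
  assumes "0 < k"
  shows "\<exists>(G::nat set) u P i. finite G \<and> additive G u \<and> is_partition G k P \<and> i < k \<and>
    EFc k u P i 1 \<and> MMS u G k > 0 \<and> u (P i) = MMS u G k / real k"
  using assms tight_MMS_eq[OF assms] tight_utility_allocation_zero[OF assms, of 1]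
    finite_tight_goods additive_tight_utility is_partition_tight_allocation[OF assms]
    tight_allocation_EF1[OF assms, of 1]
  by (intro exI[of _ "tight_goods k 1"] exI[of _ "tight_utility k 1"] exI[of _ "tight_allocation k 1"]
      exI[of _ 0]) simp

lemma EF1_not_one_of_2k_minus_2_MMS_fair:
  assumes "2 \<le> k"
  shows "\<exists>(G::nat set) u P i. finite G \<and> additive G u \<and> is_partition G k P \<and> i < k \<and>
    EFc k u P i 1 \<and> \<not> one_of_c_MMS_fair G (2 * k - 2) u P i"
proof -
  have k: "0 < k" "0 < k - 1" using assms by auto
  have "k - 1 + (k - 1) = 2 * k - 2" by simp
  then have "real k \<le> MMS (tight_utility k (k - 1)) (tight_goods k (k - 1)) (2 * k - 2)"
    using tight_MMS_ge[OF k] by simp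
  then have "tight_utility k (k - 1) (tight_allocation k (k - 1) 0)
      < MMS (tight_utility k (k - 1)) (tight_goods k (k - 1)) (2 * k - 2)"
    using tight_utility_allocation_zero[OF k] k by (simp add: of_nat_diff)
  then show ?thesis
    using k finite_tight_goods additive_tight_utility
      is_partition_tight_allocation[OF k(1)] tight_allocation_EF1[OF k]
    unfolding one_of_c_MMS_fair_def
    by (intro exI[of _ "tight_goods k (k - 1)"] exI[of _ "tight_utility k (k - 1)"]
        exI[of _ "tight_allocation k (k - 1)"] exI[of _ 0]) simp
qed

theorem mainTheorem2:
  fixes k :: nat
  assumes "k \<ge> 2"
  shows
   "(\<forall>(G::'g set) u P i. finite G \<and> additive G u \<and> is_partition G k P \<and> i < k \<and>
        PROPc G k u P i (k - 1) \<longrightarrow> frac_MMS_fair G k u P i (1 / real k))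
  \<and> (\<exists>(G::nat set) u P i. finite G \<and> additive G u \<and> is_partition G k P \<and> i < k \<and>
        EFc k u P i 1 \<and> MMS u G k > 0 \<and> u (P i) = MMS u G k / real k)
  \<and> (\<forall>(G::'g set) u P i. finite G \<and> additive G u \<and> is_partition G k P \<and> i < k \<and>
        PROPc G k u P i (k - 1) \<longrightarrow> one_of_c_MMS_fair G (2 * k - 1) u P i)
  \<and> (\<exists>(G::nat set) u P i. finite G \<and> additive G u \<and> is_partition G k P \<and> i < k \<and>
        EFc k u P i 1 \<and> \<not> one_of_c_MMS_fair G (2 * k - 2) u P i)
  \<and> (\<forall>(G::'g set) u P i. finite G \<and> binary G u \<and> is_partition G k P \<and> i < k \<and>
        PROPc G k u P i (k - 1) \<longrightarrow> MMS_fair G k u P i)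
  \<and> (\<forall>(G::'g set) u P i. finite G \<and> binary G u \<and> is_partition G k P \<and> i < k \<and>
        MMS_fair G k u P i \<longrightarrow> PROPc G k u P i (k - 1))"
proof -
  have k: "0 < k" using assms by simp
  show ?thesis
  proof ((intro conjI allI impI; (elim conjE)?), goal_cases)
    case 1 then show ?case using PROPc_imp_frac_MMS_fair[OF k] by blast
  next
    case 2 show ?case using EF1_frac_MMS_bound_attained[OF k] .
  next
    case 3 then show ?case using PROPc_imp_one_of_2k_minus_1_MMS_fair[OF k] by blast
  next
    case 4 show ?case using EF1_not_one_of_2k_minus_2_MMS_fair[OF assms] .
  next
    case 5 then show ?case using binary_PROPc_imp_MMS_fair[OF _ _ k] is_partition_subset by blast
  next
    case 6 then show ?case using binary_MMS_fair_imp_PROPc[OF _ _ k] is_partition_subset by blast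
  qed
qed

end
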